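(* Assume $r(\boldsymbol\gamma)\le1<2+\alpha\le R(\boldsymbol\gamma)$. Let $(\mathbf A^\dagger,\mathbf q^\dagger)$ maximize $\Omega$, let $(\mathbf A^\ddagger,\mathbf q^\ddagger)$ maximize $\Pi$ (both over $\mathcal A\times\mathbb R^n_{\ge0}$), and let $(\mathbf A^{\rm d},\mathbf q^{\rm d})$ be an equilibrium with $\mathbf A^{\rm d}\mathbf q^{\rm d}=\boldsymbol\beta$ and $\mathbf q^{\rm d}=\boldsymbol\gamma/(2+\alpha)$. Then $$\bar s_{\boldsymbol\gamma}(\mathbf A^\dagger)=\bar s_{\boldsymbol\gamma}(\mathbf A^\ddagger)=\frac{1-\|\boldsymbol\gamma\|_2^2}{n(n-1)}<\frac{(2+\alpha)^2-\|\boldsymbol\gamma\|_2^2}{n(n-1)}=\bar s_{\boldsymbol\gamma}(\mathbf A^{\rm d}).$$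
   Context: Model: integers $n\ge2$, $m\ge2$; $\alpha>0$, $\boldsymbol\beta\in\mathbb R^m$ with $\|\boldsymbol\beta\|_2=1$, $\boldsymbol\gamma\in\mathbb R^n$ with all $\gamma_i>0$. $\mathcal A$ is the set of real $m\times n$ matrices $\mathbf A=[\mathbf a_1,\dots,\mathbf a_n]$ with all $\|\mathbf a_i\|_2=1$. With $\mathbf x=\mathbf A\mathbf q$: $\Omega(\mathbf A,\mathbf q)=\alpha(\mathbf x^\top\boldsymbol\beta-\tfrac12\mathbf x^\top\mathbf x)+\mathbf q^\top\boldsymbol\gamma-\tfrac12\mathbf q^\top\mathbf q$, $\Pi(\mathbf A,\mathbf q)=\alpha(\mathbf x^\top\boldsymbol\beta-\mathbf x^\top\mathbf x)+\mathbf q^\top\boldsymbol\gamma-\mathbf q^\top\mathbf q$. Oligopoly: firm $i$ chooses unit $\mathbf a_i$ and $q_i\ge0$ to maximize $\Pi_i=\alpha q_i\mathbf a_i^\top(\boldsymbol\beta-\sum_{j\ne i}q_j\mathbf a_j)-(1+\alpha)q_i^2+\gamma_iq_i$ given others; an equilibrium is a profile of mutual best responses. $R(\mathbf v)=\|\mathbf v\|_1$, $r(\mathbf v)=2\|\mathbf v\|_\infty-\|\mathbf v\|_1$. Weighted average cosine similarity: $\bar s_{\boldsymbol\gamma}(\mathbf A)=\binom n2^{-1}\sum_{1\le i<j\le n}\gamma_i\gamma_j\mathbf a_i^\top\mathbf a_j$. *)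

theory Defs
  imports "HOL-Analysis.Analysis"
begin

text \<open>Vectors in R^m are real^'m, vectors in R^n are real^'n; an m x n matrix
  A = [a_1,...,a_n] is real^'n^'m, with a_i = column i A.\<close>

definition unit_cols :: "real^'n^'m \<Rightarrow> bool" where
  "unit_cols A \<longleftrightarrow> (\<forall>i. norm (column i A) = 1)"

definition nonneg_vec :: "real^'n \<Rightarrow> bool" where
  "nonneg_vec q \<longleftrightarrow> (\<forall>i. q $ i \<ge> 0)"

definition Omega :: "real \<Rightarrow> real^'m \<Rightarrow> real^'n \<Rightarrow> real^'n^'m \<Rightarrow> real^'n \<Rightarrow> real" where
  "Omega \<alpha> \<beta> \<gamma> A q = (let x = A *v q in
     \<alpha> * (x \<bullet> \<beta> - (1/2) * (x \<bullet> x)) + q \<bullet> \<gamma> - (1/2) * (q \<bullet> q))"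

definition PiW :: "real \<Rightarrow> real^'m \<Rightarrow> real^'n \<Rightarrow> real^'n^'m \<Rightarrow> real^'n \<Rightarrow> real" where
  "PiW \<alpha> \<beta> \<gamma> A q = (let x = A *v q in
     \<alpha> * (x \<bullet> \<beta> - x \<bullet> x) + q \<bullet> \<gamma> - q \<bullet> q)"

definition firm_profit :: "real \<Rightarrow> real^'m \<Rightarrow> real^'n \<Rightarrow> real^'n^'m \<Rightarrow> real^'n \<Rightarrow> 'n \<Rightarrow> real" where
  "firm_profit \<alpha> \<beta> \<gamma> A q i =
     \<alpha> * q$i * (column i A \<bullet> (\<beta> - (\<Sum>j\<in>UNIV - {i}. q$j *\<^sub>R column j A)))
     - (1 + \<alpha>) * (q$i)^2 + \<gamma>$i * q$i"

definition set_col :: "real^'n^'m \<Rightarrow> 'n \<Rightarrow> real^'m \<Rightarrow> real^'n^'m" where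
  "set_col A i a = (\<chi> r k. if k = i then a $ r else A $ r $ k)"

definition set_comp :: "real^'n \<Rightarrow> 'n \<Rightarrow> real \<Rightarrow> real^'n" where
  "set_comp q i t = (\<chi> k. if k = i then t else q $ k)"

definition is_max_Omega where
  "is_max_Omega \<alpha> \<beta> \<gamma> A q \<longleftrightarrow> unit_cols A \<and> nonneg_vec q \<and>
     (\<forall>A' q'. unit_cols A' \<and> nonneg_vec q' \<longrightarrow> Omega \<alpha> \<beta> \<gamma> A' q' \<le> Omega \<alpha> \<beta> \<gamma> A q)"

definition is_max_Pi where
  "is_max_Pi \<alpha> \<beta> \<gamma> A q \<longleftrightarrow> unit_cols A \<and> nonneg_vec q \<and>
     (\<forall>A' q'. unit_cols A' \<and> nonneg_vec q' \<longrightarrow> PiW \<alpha> \<beta> \<gamma> A' q' \<le> PiW \<alpha> \<beta> \<gamma> A q)"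

definition is_equilibrium where
  "is_equilibrium \<alpha> \<beta> \<gamma> A q \<longleftrightarrow> unit_cols A \<and> nonneg_vec q \<and>
     (\<forall>i a t. norm a = 1 \<and> t \<ge> 0 \<longrightarrow>
        firm_profit \<alpha> \<beta> \<gamma> (set_col A i a) (set_comp q i t) i \<le> firm_profit \<alpha> \<beta> \<gamma> A q i)"

definition l1norm :: "real^'n \<Rightarrow> real" where
  "l1norm v = (\<Sum>i\<in>UNIV. \<bar>v $ i\<bar>)"

definition linfnorm :: "real^'n \<Rightarrow> real" where
  "linfnorm v = Max (range (\<lambda>i. \<bar>v $ i\<bar>))"

definition R_fun :: "real^'n \<Rightarrow> real" where
  "R_fun v = l1norm v"

definition r_fun :: "real^'n \<Rightarrow> real" where
  "r_fun v = 2 * linfnorm v - l1norm v"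

definition avg_cos_sim :: "real^('n::{finite,linorder}) \<Rightarrow> real^('n::{finite,linorder})^'m \<Rightarrow> real" where
  "avg_cos_sim \<gamma> A = (\<Sum>(i,j)\<in>{(i,j). i < j}. \<gamma>$i * \<gamma>$j * (column i A \<bullet> column j A))
                        / real (CARD('n) choose 2)"

end

theory Submission
  imports Defs
begin

text \<open>By completing the square, \<open>\<Omega>(A, q) \<le> \<alpha>/2 + \<parallel>\<gamma>\<parallel>\<^sup>2/2\<close> with equality iff
  \<open>A q = \<beta>\<close> and \<open>q = \<gamma>\<close>, and \<open>\<Pi>\<close> attains its bound iff \<open>A q = \<beta>/2\<close> and \<open>q = \<gamma>/2\<close>;
  so both welfare maximizers satisfy \<open>A \<gamma> = \<beta>\<close>, provided some \<open>A\<close> with unit columns does.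
  Such an \<open>A\<close> exists because \<open>r(\<gamma>) \<le> 1 \<le> R(\<gamma>)\<close> says that no side of the would-be
  polygon with sides \<open>\<gamma>\<^sub>1, \<dots>, \<gamma>\<^sub>n, 1\<close> is longer than the sum of the others, so the polygon
  closes in the plane, which embeds isometrically into the plane spanned by \<open>\<beta>\<close> and a unit
  vector orthogonal to it. Finally, for unit columns
  \<open>\<parallel>A \<gamma>\<parallel>\<^sup>2 = \<parallel>\<gamma>\<parallel>\<^sup>2 + 2 \<Sum>\<^sub>i\<^sub><\<^sub>j \<gamma>\<^sub>i \<gamma>\<^sub>j a\<^sub>i \<bullet> a\<^sub>j\<close>, so the weighted average cosine similarity
  is determined by \<open>\<parallel>A \<gamma>\<parallel>\<close>, which is \<open>1\<close> at both optima and \<open>2 + \<alpha>\<close> at the equilibrium.\<close>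

lemma exists_unit_complex_norm_add_eq:
  fixes s c \<rho> :: real
  assumes "0 \<le> s" "0 < c" "\<bar>s - c\<bar> \<le> \<rho>" "\<rho> \<le> s + c"
  obtains w where "cmod w = 1" "cmod (of_real s + of_real c * w) = \<rho>"
proof (cases "s = 0")
  case True
  with assms have "\<rho> = c" by auto
  with True assms show ?thesis by (intro that[of 1]) auto
next
  case False
  with assms have sc: "2 * s * c > 0" by simp
  have "0 \<le> \<rho>" using assms(3) by linarith
  define cs where "cs = (\<rho>\<^sup>2 - s\<^sup>2 - c\<^sup>2) / (2 * s * c)"
  have "\<rho>\<^sup>2 \<le> (s + c)\<^sup>2" using power_mono[OF assms(4) \<open>0 \<le> \<rho>\<close>] .
  moreover have "\<bar>s - c\<bar>\<^sup>2 \<le> \<rho>\<^sup>2" using power_mono[OF assms(3) abs_ge_zero] .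
  ultimately have "\<bar>\<rho>\<^sup>2 - s\<^sup>2 - c\<^sup>2\<bar> \<le> 2 * s * c"
    unfolding power2_sum power2_abs power2_diff by linarith
  then have "cs\<^sup>2 \<le> 1"
    using sc by (simp add: cs_def abs_square_le_1 abs_divide divide_le_eq)
  define w where "w = Complex cs (sqrt (1 - cs\<^sup>2))"
  \<comment> \<open>law of cosines: \<open>cs\<close> is the cosine of the angle between the sides \<open>s\<close> and \<open>c w\<close>\<close>
  have "(cmod (of_real s + of_real c * w))\<^sup>2 = (s + c * cs)\<^sup>2 + (c * sqrt (1 - cs\<^sup>2))\<^sup>2"
    by (simp add: w_def cmod_def complex_of_real_def)
  also have "\<dots> = s\<^sup>2 + c\<^sup>2 + 2 * s * c * cs"
    using \<open>cs\<^sup>2 \<le> 1\<close> by (simp add: power2_eq_square algebra_simps)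
  also have "\<dots> = \<rho>\<^sup>2"
    using False assms(2) unfolding cs_def by (simp add: field_simps)
  finally have "cmod (of_real s + of_real c * w) = \<rho>"
    using \<open>0 \<le> \<rho>\<close> by (simp add: power2_eq_iff_nonneg)
  moreover have "cmod w = 1"
    using \<open>cs\<^sup>2 \<le> 1\<close> by (simp add: w_def cmod_def)
  ultimately show ?thesis using that by blast
qed

lemma exists_unit_complex_weighted_sum_eq:
  fixes g :: "'a \<Rightarrow> real"
  assumes "finite I" "I \<noteq> {}" "\<forall>i\<in>I. g i > 0" "0 \<le> \<rho>" "\<rho> \<le> sum g I"
    and "\<forall>i\<in>I. 2 * g i - sum g I \<le> \<rho>"
  shows "\<exists>z. (\<forall>i\<in>I. cmod (z i) = 1) \<and> (\<Sum>i\<in>I. of_real (g i) * z i) = of_real \<rho>"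
  using assms
proof (induction I arbitrary: \<rho> rule: finite_ne_induct)
  case (singleton x)
  then show ?case by (intro exI[of _ "\<lambda>_. 1"]) auto
next
  case (insert x F)
  define c where "c = g x"
  define S where "S = sum g F"
  have sum_insert: "sum g (insert x F) = c + S"
    using insert.hyps by (simp add: c_def S_def)
  have "c > 0" using insert.prems by (simp add: c_def)
  have "Max (g ` F) \<in> g ` F"
    using insert.hyps by simp
  then obtain i0 where "i0 \<in> F" and "g i0 = Max (g ` F)"
    by (metis imageE)
  then have i0_max: "\<forall>i\<in>F. g i \<le> g i0"
    using insert.hyps by simp
  have "g i0 \<le> S"
    unfolding S_def using insert \<open>i0 \<in> F\<close> by (intro member_le_sum) auto
  \<comment> \<open>the diagonal of the polygon that separates the side \<open>c\<close> from the sides indexed by \<open>F\<close>\<close>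
  define \<sigma> where "\<sigma> = max \<bar>\<rho> - c\<bar> (2 * g i0 - S)"
  have side_x: "c - S \<le> \<rho>" and side_i0: "2 * g i0 - S - c \<le> \<rho>" and "\<rho> \<le> c + S"
    using insert.prems(3,4) \<open>i0 \<in> F\<close> by (auto simp: sum_insert c_def)
  have "0 \<le> \<sigma>" "\<sigma> \<le> S" "\<rho> \<le> \<sigma> + c" "\<bar>\<sigma> - c\<bar> \<le> \<rho>"
    using side_x side_i0 \<open>\<rho> \<le> c + S\<close> \<open>g i0 \<le> S\<close> \<open>c > 0\<close> \<open>0 \<le> \<rho>\<close>
    unfolding \<sigma>_def by (auto simp: abs_le_iff)
  moreover have "\<forall>i\<in>F. 2 * g i - S \<le> \<sigma>"
    using i0_max unfolding \<sigma>_def by force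
  ultimately obtain z where z: "\<forall>i\<in>F. cmod (z i) = 1" "(\<Sum>i\<in>F. of_real (g i) * z i) = of_real \<sigma>"
    using insert.IH[of \<sigma>] insert.prems(1) by (auto simp: S_def)
  obtain w where w: "cmod w = 1" "cmod (of_real \<sigma> + of_real c * w) = \<rho>"
    using exists_unit_complex_norm_add_eq[of \<sigma> c \<rho>] \<open>0 \<le> \<sigma>\<close> \<open>c > 0\<close> \<open>\<bar>\<sigma> - c\<bar> \<le> \<rho>\<close> \<open>\<rho> \<le> \<sigma> + c\<close>
    by auto
  define T where "T = of_real \<sigma> + of_real c * w"
  \<comment> \<open>rotate the polygon so that its closing side becomes real\<close>
  define u where "u = (if T = 0 then 1 else of_real \<rho> / T)"
  have "cmod u = 1" "u * T = of_real \<rho>"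
    using w by (auto simp: u_def T_def norm_divide)
  have "(\<Sum>i\<in>insert x F. of_real (g i) * (z(x := w)) i) = of_real c * w + (\<Sum>i\<in>F. of_real (g i) * z i)"
    using insert.hyps by (simp add: c_def) (intro sum.cong, auto)
  also have "\<dots> = T" using z by (simp add: T_def)
  finally have "(\<Sum>i\<in>insert x F. of_real (g i) * (u * (z(x := w)) i)) = of_real \<rho>"
    using \<open>u * T = of_real \<rho>\<close> by (simp add: sum_distrib_left[symmetric] mult.left_commute)
  moreover have "\<forall>i\<in>insert x F. cmod (u * (z(x := w)) i) = 1"
    using z w \<open>cmod u = 1\<close> by (auto simp: norm_mult)
  ultimately show ?case by (intro exI[of _ "\<lambda>i. u * (z(x := w)) i"]) simp
qed

lemma exists_unit_orthogonal:
  fixes b :: "'a::euclidean_space"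
  assumes "2 \<le> DIM('a)"
  obtains u where "norm u = 1" "b \<bullet> u = 0"
proof -
  obtain y where "y \<noteq> 0" "orthogonal b y"
    using orthogonal_to_vector_exists[OF assms] by blast
  then show ?thesis
    using that[of "y /\<^sub>R norm y"] by (simp add: orthogonal_def)
qed

lemma norm_orthonormal_combination:
  fixes b u :: "'a::real_inner"
  assumes "norm b = 1" "norm u = 1" "b \<bullet> u = 0"
  shows "norm (Re z *\<^sub>R b + Im z *\<^sub>R u) = cmod z"
proof -
  have "b \<bullet> b = 1" "u \<bullet> u = 1" "u \<bullet> b = 0"
    using assms by (simp_all add: norm_eq_1 inner_commute)
  then have "(norm (Re z *\<^sub>R b + Im z *\<^sub>R u))\<^sup>2 = (Re z)\<^sup>2 + (Im z)\<^sup>2"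
    unfolding power2_norm_eq_inner using assms(3)
    by (simp add: inner_add_left inner_add_right power2_eq_square)
  then show ?thesis
    by (simp add: cmod_def real_sqrt_unique)
qed

lemma mult_vec_eq_sum_columns:
  fixes A :: "real^'n^'m"
  shows "A *v x = (\<Sum>i\<in>UNIV. x $ i *\<^sub>R column i A)"
  by (simp add: matrix_mult_sum scalar_mult_eq_scaleR)

lemma exists_unit_cols_mult_vec_eq:
  fixes \<beta> :: "real^'m" and \<gamma> :: "real^'n"
  assumes "CARD('m) \<ge> 2" "\<beta> \<noteq> 0" "\<forall>i. \<gamma> $ i > 0"
    and "r_fun \<gamma> \<le> norm \<beta>" "norm \<beta> \<le> R_fun \<gamma>"
  obtains A :: "real^'n^'m" where "unit_cols A" "A *v \<gamma> = \<beta>"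
proof -
  have l1: "l1norm \<gamma> = (\<Sum>i\<in>UNIV. \<gamma> $ i)"
    using assms(3) unfolding l1norm_def by (intro sum.cong) (auto simp: less_imp_le)
  have le_linfnorm: "\<gamma> $ i \<le> linfnorm \<gamma>" for i
    unfolding linfnorm_def by (rule order_trans[OF abs_ge_self], rule Max_ge) auto
  have "2 * \<gamma> $ i - (\<Sum>i\<in>UNIV. \<gamma> $ i) \<le> norm \<beta>" for i
    using le_linfnorm[of i] assms(4) l1 unfolding r_fun_def by linarith
  then obtain z where z_unit: "\<forall>i\<in>UNIV. cmod (z i) = 1"
    and z_sum: "(\<Sum>i\<in>UNIV. of_real (\<gamma> $ i) * z i) = of_real (norm \<beta>)"
    using exists_unit_complex_weighted_sum_eq[of UNIV "\<lambda>i. \<gamma> $ i" "norm \<beta>"] assms(3,5) l1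
    by (auto simp: R_fun_def)
  define b where "b = \<beta> /\<^sub>R norm \<beta>"
  have "norm b = 1"
    using assms(2) by (simp add: b_def)
  obtain u :: "real^'m" where "norm u = 1" "b \<bullet> u = 0"
    using exists_unit_orthogonal[of b] assms(1) by auto
  define A :: "real^'n^'m" where "A = (\<chi> r k. (Re (z k) *\<^sub>R b + Im (z k) *\<^sub>R u) $ r)"
  have col: "column k A = Re (z k) *\<^sub>R b + Im (z k) *\<^sub>R u" for k
    by (simp add: A_def column_def vec_eq_iff)
  have "unit_cols A"
    unfolding unit_cols_def col
    using norm_orthonormal_combination[OF \<open>norm b = 1\<close> \<open>norm u = 1\<close> \<open>b \<bullet> u = 0\<close>] z_unit by simp
  moreover have "A *v \<gamma> = (\<Sum>i\<in>UNIV. \<gamma> $ i * Re (z i)) *\<^sub>R b + (\<Sum>i\<in>UNIV. \<gamma> $ i * Im (z i)) *\<^sub>R u"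
    by (simp add: mult_vec_eq_sum_columns col scaleR_add_right sum.distrib scaleR_sum_left)
  moreover have "(\<Sum>i\<in>UNIV. \<gamma> $ i * Re (z i)) = norm \<beta>" "(\<Sum>i\<in>UNIV. \<gamma> $ i * Im (z i)) = 0"
    using arg_cong[OF z_sum, of Re] arg_cong[OF z_sum, of Im] by (simp_all add: Re_sum Im_sum)
  ultimately show ?thesis
    using that assms(2) by (simp add: b_def)
qed

lemma real_choose_two: "real (n choose 2) = real n * (real n - 1) / 2"
  by (simp add: binomial_gbinomial gbinomial_Suc numeral_2_eq_2)

lemma sum_sum_symmetric:
  fixes f :: "'a::{finite,linorder} \<Rightarrow> 'a \<Rightarrow> 'b::comm_semiring_1"
  assumes "\<And>i j. f i j = f j i"
  shows "(\<Sum>i\<in>UNIV. \<Sum>j\<in>UNIV. f i j) = 2 * (\<Sum>(i, j)\<in>{(i, j). i < j}. f i j) + (\<Sum>i\<in>UNIV. f i i)"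
proof -
  define P where "P = {(i::'a, j). i < j}"
  define D where "D = range (\<lambda>i::'a. (i, i))"
  have "(i, j) \<in> P \<union> prod.swap ` P \<union> D" for i j
    by (cases i j rule: linorder_cases) (auto simp: P_def D_def)
  then have UNIV_split: "UNIV = P \<union> prod.swap ` P \<union> D"
    by (metis UNIV_eq_I surj_pair)
  have disjoint: "P \<inter> prod.swap ` P = {}" "(P \<union> prod.swap ` P) \<inter> D = {}"
    by (auto simp: P_def D_def)
  have swap: "(\<Sum>(i, j)\<in>prod.swap ` P. f i j) = (\<Sum>(i, j)\<in>P. f i j)"
    by (simp add: sum.reindex case_prod_unfold assms)
  have diagonal: "(\<Sum>(i, j)\<in>D. f i j) = (\<Sum>i\<in>UNIV. f i i)"
    by (simp add: D_def sum.reindex inj_on_def)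
  have "(\<Sum>i\<in>UNIV. \<Sum>j\<in>UNIV. f i j) = (\<Sum>(i, j)\<in>P \<union> prod.swap ` P \<union> D. f i j)"
    by (simp add: sum.cartesian_product flip: UNIV_split UNIV_Times_UNIV)
  also have "\<dots> = 2 * (\<Sum>(i, j)\<in>P. f i j) + (\<Sum>i\<in>UNIV. f i i)"
    by (simp add: sum.union_disjoint disjoint swap diagonal mult_2)
  finally show ?thesis
    by (simp add: P_def)
qed

lemma power2_norm_mult_vec:
  fixes A :: "real^'n^'m"
  shows "(norm (A *v x))\<^sup>2 = (\<Sum>i\<in>UNIV. \<Sum>j\<in>UNIV. x $ i * x $ j * (column i A \<bullet> column j A))"
  unfolding power2_norm_eq_inner mult_vec_eq_sum_columns inner_sum_left
  by (simp add: inner_sum_right mult.assoc mult.left_commute)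

lemma avg_cos_sim_unit_cols:
  fixes \<gamma> :: "real^('n::{finite,linorder})" and A :: "real^('n::{finite,linorder})^'m"
  assumes "unit_cols A"
  shows "avg_cos_sim \<gamma> A = ((norm (A *v \<gamma>))\<^sup>2 - (norm \<gamma>)\<^sup>2) / (real CARD('n) * (real CARD('n) - 1))"
proof -
  have "column i A \<bullet> column i A = 1" for i
    using assms by (simp add: unit_cols_def norm_eq_1)
  then have diagonal: "(\<Sum>i\<in>UNIV. \<gamma> $ i * \<gamma> $ i * (column i A \<bullet> column i A)) = (norm \<gamma>)\<^sup>2"
    by (simp add: power2_norm_eq_inner inner_vec_def)
  have "(norm (A *v \<gamma>))\<^sup>2
      = 2 * (\<Sum>(i, j)\<in>{(i, j). i < j}. \<gamma> $ i * \<gamma> $ j * (column i A \<bullet> column j A))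
        + (\<Sum>i\<in>UNIV. \<gamma> $ i * \<gamma> $ i * (column i A \<bullet> column i A))"
    unfolding power2_norm_mult_vec by (rule sum_sum_symmetric) (simp add: inner_commute)
  then show ?thesis
    by (simp add: avg_cos_sim_def real_choose_two diagonal)
qed

lemma Omega_completed_square:
  assumes "norm \<beta> = 1"
  shows "Omega \<alpha> \<beta> \<gamma> A q
    = \<alpha> / 2 * (1 - (norm (A *v q - \<beta>))\<^sup>2) + ((norm \<gamma>)\<^sup>2 - (norm (q - \<gamma>))\<^sup>2) / 2"
  using assms unfolding Omega_def Let_def power2_norm_eq_inner norm_eq_1
  by (simp add: inner_diff_left inner_diff_right inner_commute field_simps)

lemma PiW_completed_square:
  assumes "norm \<beta> = 1"
  shows "PiW \<alpha> \<beta> \<gamma> A q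
    = \<alpha> * (1 / 4 - (norm (A *v q - (1 / 2) *\<^sub>R \<beta>))\<^sup>2) + (norm \<gamma>)\<^sup>2 / 4 - (norm (q - (1 / 2) *\<^sub>R \<gamma>))\<^sup>2"
  using assms unfolding PiW_def Let_def power2_norm_eq_inner norm_eq_1
  by (simp add: inner_diff_left inner_diff_right inner_commute algebra_simps)

lemma weighted_norm_squares_le_zero:
  fixes x :: "'a::real_normed_vector" and y :: "'b::real_normed_vector"
  assumes "\<alpha> > 0" "\<alpha> * (norm x)\<^sup>2 + (norm y)\<^sup>2 \<le> 0"
  shows "x = 0" "y = 0"
proof -
  have "0 \<le> \<alpha> * (norm x)\<^sup>2" "0 \<le> (norm y)\<^sup>2"
    using assms(1) by simp_all
  with assms(2) have "\<alpha> * (norm x)\<^sup>2 = 0" "(norm y)\<^sup>2 = 0"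
    by linarith+
  with assms(1) show "x = 0" "y = 0"
    by simp_all
qed

lemma is_max_Omega_mult_vec_eq:
  assumes "is_max_Omega \<alpha> \<beta> \<gamma> A q" "\<alpha> > 0" "norm \<beta> = 1" "nonneg_vec \<gamma>"
    and "unit_cols A0" "A0 *v \<gamma> = \<beta>"
  shows "A *v \<gamma> = \<beta>"
proof -
  \<comment> \<open>\<open>(A0, \<gamma>)\<close> attains the upper bound of the completed square, so every maximizer does\<close>
  have "Omega \<alpha> \<beta> \<gamma> A0 \<gamma> \<le> Omega \<alpha> \<beta> \<gamma> A q"
    using assms(1,4,5) unfolding is_max_Omega_def by blast
  then have "\<alpha> * (norm (A *v q - \<beta>))\<^sup>2 + (norm (q - \<gamma>))\<^sup>2 \<le> 0"
    using assms(6) by (simp add: Omega_completed_square[OF assms(3)] algebra_simps)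
  then have "A *v q - \<beta> = 0" "q - \<gamma> = 0"
    using weighted_norm_squares_le_zero assms(2) by blast+
  then show ?thesis
    by simp
qed

lemma is_max_Pi_mult_vec_eq:
  assumes "is_max_Pi \<alpha> \<beta> \<gamma> A q" "\<alpha> > 0" "norm \<beta> = 1" "nonneg_vec \<gamma>"
    and "unit_cols A0" "A0 *v \<gamma> = \<beta>"
  shows "A *v \<gamma> = \<beta>"
proof -
  have "nonneg_vec ((1 / 2) *\<^sub>R \<gamma>)"
    using assms(4) by (simp add: nonneg_vec_def)
  then have "PiW \<alpha> \<beta> \<gamma> A0 ((1 / 2) *\<^sub>R \<gamma>) \<le> PiW \<alpha> \<beta> \<gamma> A q"
    using assms(1,5) unfolding is_max_Pi_def by blast
  then have "\<alpha> * (norm (A *v q - (1 / 2) *\<^sub>R \<beta>))\<^sup>2 + (norm (q - (1 / 2) *\<^sub>R \<gamma>))\<^sup>2 \<le> 0"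
    using assms(6) by (simp add: PiW_completed_square[OF assms(3)] matrix_vector_mult_scaleR algebra_simps)
  then have "A *v q - (1 / 2) *\<^sub>R \<beta> = 0" "q - (1 / 2) *\<^sub>R \<gamma> = 0"
    using weighted_norm_squares_le_zero assms(2) by blast+
  then have "(1 / 2) *\<^sub>R (A *v \<gamma>) = (1 / 2) *\<^sub>R \<beta>"
    by (simp add: matrix_vector_mult_scaleR)
  then show ?thesis
    by simp
qed

theorem corollary1:
  fixes \<alpha> :: real and \<beta> :: "real^'m" and \<gamma> :: "real^('n::{finite,linorder})"
    and A1 A2 Ad :: "real^('n::{finite,linorder})^'m" and q1 q2 qd :: "real^('n::{finite,linorder})"
  assumes "CARD('n) \<ge> 2" and "CARD('m) \<ge> 2"
    and "\<alpha> > 0" and "norm \<beta> = 1" and "\<forall>i. \<gamma> $ i > 0"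
    and "r_fun \<gamma> \<le> 1" and "1 < 2 + \<alpha>" and "2 + \<alpha> \<le> R_fun \<gamma>"
    and "is_max_Omega \<alpha> \<beta> \<gamma> A1 q1"
    and "is_max_Pi \<alpha> \<beta> \<gamma> A2 q2"
    and "is_equilibrium \<alpha> \<beta> \<gamma> Ad qd" and "Ad *v qd = \<beta>" and "qd = (1 / (2 + \<alpha>)) *\<^sub>R \<gamma>"
  shows "avg_cos_sim \<gamma> A1 = (1 - (norm \<gamma>)^2) / (real CARD('n) * (real CARD('n) - 1))
       \<and> avg_cos_sim \<gamma> A2 = (1 - (norm \<gamma>)^2) / (real CARD('n) * (real CARD('n) - 1))
       \<and> (1 - (norm \<gamma>)^2) / (real CARD('n) * (real CARD('n) - 1))
           < ((2 + \<alpha>)^2 - (norm \<gamma>)^2) / (real CARD('n) * (real CARD('n) - 1))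
       \<and> avg_cos_sim \<gamma> Ad = ((2 + \<alpha>)^2 - (norm \<gamma>)^2) / (real CARD('n) * (real CARD('n) - 1))"
proof -
  let ?d = "real CARD('n) * (real CARD('n) - 1)"
  have "nonneg_vec \<gamma>"
    using assms(5) by (simp add: nonneg_vec_def less_imp_le)
  have "\<beta> \<noteq> 0" "r_fun \<gamma> \<le> norm \<beta>" "norm \<beta> \<le> R_fun \<gamma>"
    using assms(4,6,7,8) by auto
  then obtain A0 where "unit_cols A0" "A0 *v \<gamma> = \<beta>"
    using exists_unit_cols_mult_vec_eq[OF assms(2) _ assms(5)] by blast
  then have A1: "A1 *v \<gamma> = \<beta>" and A2: "A2 *v \<gamma> = \<beta>"
    using is_max_Omega_mult_vec_eq[OF assms(9)] is_max_Pi_mult_vec_eq[OF assms(10)] assms(3,4)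
      \<open>nonneg_vec \<gamma>\<close> by blast+
  have "Ad *v \<gamma> = Ad *v ((2 + \<alpha>) *\<^sub>R qd)"
    using assms(3,13) by simp
  also have "\<dots> = (2 + \<alpha>) *\<^sub>R \<beta>"
    using assms(12) by (simp add: matrix_vector_mult_scaleR)
  finally have Ad: "Ad *v \<gamma> = (2 + \<alpha>) *\<^sub>R \<beta>" .
  have "unit_cols A1" "unit_cols A2" "unit_cols Ad"
    using assms(9-11) by (simp_all add: is_max_Omega_def is_max_Pi_def is_equilibrium_def)
  then have "avg_cos_sim \<gamma> A1 = (1 - (norm \<gamma>)\<^sup>2) / ?d" "avg_cos_sim \<gamma> A2 = (1 - (norm \<gamma>)\<^sup>2) / ?d"
    and "avg_cos_sim \<gamma> Ad = ((2 + \<alpha>)\<^sup>2 - (norm \<gamma>)\<^sup>2) / ?d"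
    using A1 A2 Ad assms(3,4) by (simp_all add: avg_cos_sim_unit_cols)
  moreover have "(1 - (norm \<gamma>)\<^sup>2) / ?d < ((2 + \<alpha>)\<^sup>2 - (norm \<gamma>)\<^sup>2) / ?d"
    using one_less_power[OF assms(7), of 2] assms(1) by (simp add: divide_strict_right_mono)
  ultimately show ?thesis
    by simp
qed

end
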